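(* Let $(R_0,R_1,s,t,i,\circ)$ be a strict $2$-rack and let $X:=\ker(s)=\{f\in R_1:s(f)=1\}$. Then $x\cdot r:=x\lhd i(r)$ ($x\in X$, $r\in R_0$) defines an action of the rack $R_0$ on the set $X$, and the restriction $t|_{X}:X\to R_0$ satisfies $t(x\cdot r)=t(x)\lhd r$. Consequently $(R_0,X,t|_X)$ is a generalized augmented rack, and so (with the rack product $x\lhd' y:=x\cdot t(y)$ on $X$) $t|_X:X\to R_0$ is a crossed module of racks.
   Context: A (right) rack is a set with a binary operation $\lhd$ such that each $x\mapsto x\lhd y$ is bijective and $(x\lhd y)\lhd z=(x\lhd z)\lhd(y\lhd z)$; it is pointed if it has an element $1$ with $1\lhd x=1$, $x\lhd 1=x$. A strict $2$-rack is a category object in racks: pointed racks $R_0,R_1$, morphisms of pointed racks $s,t:R_1\to R_0$, $i:R_0\to R_1$, a composition $\circ:R_1\times_{R_0}R_1\to R_1$ which is a rack morphism, satisfying the category axioms (in particular $s\circ i=t\circ i=\mathrm{id}_{R_0}$). An action of a rack $R$ on a set $X$ is a family of bijections $x\mapsto x\cdot r$ with $(x\cdot r)\cdot r'=(x\cdot r')\cdot(r\lhd r')$. A generalized augmented rack is $(R,X,p)$ with $R$ a rack, $X$ an $R$-set and $p:X\to R$ a map with $p(x\cdot r)=p(x)\lhd r$. A crossed module of racks is a rack morphism $\mu:A\to B$ with an action of $B$ on $A$ by automorphisms (i.e. also $(a\lhd a')\cdot b=(a\cdot b)\lhd(a'\cdot b)$) such that $\mu(a\cdot b)=\mu(a)\lhd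 b$ and $a\cdot\mu(a')=a\lhd a'$. *)

theory Defs
  imports Main
begin

text \<open>Racks are given by an explicit carrier set and a binary operation
  (the right rack operation, written x \<lhd> y as op x y).\<close>

definition rack :: "'a set \<Rightarrow> ('a \<Rightarrow> 'a \<Rightarrow> 'a) \<Rightarrow> bool" where
  "rack A op \<longleftrightarrow>
     (\<forall>x\<in>A. \<forall>y\<in>A. op x y \<in> A) \<and>
     (\<forall>y\<in>A. bij_betw (\<lambda>x. op x y) A A) \<and>
     (\<forall>x\<in>A. \<forall>y\<in>A. \<forall>z\<in>A. op (op x y) z = op (op x z) (op y z))"

definition pointed_rack :: "'a set \<Rightarrow> ('a \<Rightarrow> 'a \<Rightarrow> 'a) \<Rightarrow> 'a \<Rightarrow> bool" where
  "pointed_rack A op e \<longleftrightarrow> rack A op \<and> e \<in> A \<and>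
     (\<forall>x\<in>A. op e x = e \<and> op x e = x)"

definition rack_hom ::
  "'a set \<Rightarrow> ('a \<Rightarrow> 'a \<Rightarrow> 'a) \<Rightarrow> 'b set \<Rightarrow> ('b \<Rightarrow> 'b \<Rightarrow> 'b) \<Rightarrow> ('a \<Rightarrow> 'b) \<Rightarrow> bool" where
  "rack_hom A opA B opB f \<longleftrightarrow>
     (\<forall>x\<in>A. f x \<in> B) \<and> (\<forall>x\<in>A. \<forall>y\<in>A. f (opA x y) = opB (f x) (f y))"

definition pointed_rack_hom ::
  "'a set \<Rightarrow> ('a \<Rightarrow> 'a \<Rightarrow> 'a) \<Rightarrow> 'a \<Rightarrow> 'b set \<Rightarrow> ('b \<Rightarrow> 'b \<Rightarrow> 'b) \<Rightarrow> 'b \<Rightarrow> ('a \<Rightarrow> 'b) \<Rightarrow> bool" where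
  "pointed_rack_hom A opA eA B opB eB f \<longleftrightarrow> rack_hom A opA B opB f \<and> f eA = eB"

text \<open>Strict 2-rack: a category object in (pointed) racks.  Objects R0, morphisms R1,
  source s, target t, identities i, and composition cmp g f (= g \<circ> f),
  defined on the fibre product of pairs (g,f) with s g = t f.\<close>

definition strict_2rack ::
  "'a set \<Rightarrow> ('a \<Rightarrow> 'a \<Rightarrow> 'a) \<Rightarrow> 'a \<Rightarrow> 'b set \<Rightarrow> ('b \<Rightarrow> 'b \<Rightarrow> 'b) \<Rightarrow> 'b \<Rightarrow>
   ('b \<Rightarrow> 'a) \<Rightarrow> ('b \<Rightarrow> 'a) \<Rightarrow> ('a \<Rightarrow> 'b) \<Rightarrow> ('b \<Rightarrow> 'b \<Rightarrow> 'b) \<Rightarrow> bool" where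
  "strict_2rack R0 op0 e0 R1 op1 e1 s t i cmp \<longleftrightarrow>
     pointed_rack R0 op0 e0 \<and> pointed_rack R1 op1 e1 \<and>
     pointed_rack_hom R1 op1 e1 R0 op0 e0 s \<and>
     pointed_rack_hom R1 op1 e1 R0 op0 e0 t \<and>
     pointed_rack_hom R0 op0 e0 R1 op1 e1 i \<and>
     \<comment> \<open>composition is a map R1 \<times>_{R0} R1 \<rightarrow> R1 which is a rack morphism\<close>
     (\<forall>g\<in>R1. \<forall>f\<in>R1. s g = t f \<longrightarrow> cmp g f \<in> R1) \<and>
     (\<forall>g\<in>R1. \<forall>f\<in>R1. \<forall>g'\<in>R1. \<forall>f'\<in>R1. s g = t f \<longrightarrow> s g' = t f' \<longrightarrow>
         cmp (op1 g g') (op1 f f') = op1 (cmp g f) (cmp g' f')) \<and>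
     \<comment> \<open>category axioms\<close>
     (\<forall>x\<in>R0. s (i x) = x \<and> t (i x) = x) \<and>
     (\<forall>g\<in>R1. \<forall>f\<in>R1. s g = t f \<longrightarrow> s (cmp g f) = s f \<and> t (cmp g f) = t g) \<and>
     (\<forall>h\<in>R1. \<forall>g\<in>R1. \<forall>f\<in>R1. s h = t g \<longrightarrow> s g = t f \<longrightarrow>
         cmp (cmp h g) f = cmp h (cmp g f)) \<and>
     (\<forall>f\<in>R1. cmp f (i (s f)) = f \<and> cmp (i (t f)) f = f)"

definition rack_action ::
  "'a set \<Rightarrow> ('a \<Rightarrow> 'a \<Rightarrow> 'a) \<Rightarrow> 'x set \<Rightarrow> ('x \<Rightarrow> 'a \<Rightarrow> 'x) \<Rightarrow> bool" where
  "rack_action R op X act \<longleftrightarrow>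
     (\<forall>r\<in>R. bij_betw (\<lambda>x. act x r) X X) \<and>
     (\<forall>x\<in>X. \<forall>r\<in>R. \<forall>r'\<in>R. act (act x r) r' = act (act x r') (op r r'))"

definition gen_augmented_rack ::
  "'a set \<Rightarrow> ('a \<Rightarrow> 'a \<Rightarrow> 'a) \<Rightarrow> 'x set \<Rightarrow> ('x \<Rightarrow> 'a \<Rightarrow> 'x) \<Rightarrow> ('x \<Rightarrow> 'a) \<Rightarrow> bool" where
  "gen_augmented_rack R op X act p \<longleftrightarrow>
     rack R op \<and> rack_action R op X act \<and>
     (\<forall>x\<in>X. p x \<in> R) \<and>
     (\<forall>x\<in>X. \<forall>r\<in>R. p (act x r) = op (p x) r)"

definition crossed_module_racks ::
  "'x set \<Rightarrow> ('x \<Rightarrow> 'x \<Rightarrow> 'x) \<Rightarrow> 'a set \<Rightarrow> ('a \<Rightarrow> 'a \<Rightarrow> 'a) \<Rightarrow> ('x \<Rightarrow> 'a \<Rightarrow> 'x) \<Rightarrow> ('x \<Rightarrow> 'a) \<Rightarrow> bool" where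
  "crossed_module_racks A opA B opB act mu \<longleftrightarrow>
     rack A opA \<and> rack B opB \<and> rack_hom A opA B opB mu \<and>
     rack_action B opB A act \<and>
     (\<forall>a\<in>A. \<forall>a'\<in>A. \<forall>b\<in>B. act (opA a a') b = opA (act a b) (act a' b)) \<and>
     (\<forall>a\<in>A. \<forall>b\<in>B. mu (act a b) = opB (mu a) b) \<and>
     (\<forall>a\<in>A. \<forall>a'\<in>A. act a (mu a') = opA a a')"

end

theory Submission
  imports Defs
begin

text \<open>Right multiplication by identity morphisms, x \<cdot> r = x \<lhd> i(r), is a rack action of R0
  on R1 because i is a rack morphism and \<lhd> is self-distributive.  Since s(x \<cdot> r) = s(x) \<lhd> r
  and right multiplication in R0 is injective and fixes the base point, x \<cdot> r lies in ker s
  exactly when x does, so the action restricts to X = ker s; and t(x \<cdot> r) = t(x) \<lhd> r because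
  t \<circ> i = id.  Finally every generalized augmented rack (R, X, p) is a crossed module for the
  product x \<lhd>' y = x \<cdot> p(y): all its axioms are instances of the action law and of the
  equivariance of p.\<close>

lemma rack_action_via_hom:
  assumes "rack B opB" and "rack_hom A opA B opB f"
  shows "rack_action A opA B (\<lambda>x a. opB x (f a))"
  unfolding rack_action_def
proof (intro conjI ballI)
  fix a assume "a \<in> A"
  then show "bij_betw (\<lambda>x. opB x (f a)) B B"
    using assms unfolding rack_def rack_hom_def by blast
next
  fix x a a' assume "x \<in> B" "a \<in> A" "a' \<in> A"
  moreover have "\<forall>x\<in>B. \<forall>y\<in>B. \<forall>z\<in>B. opB (opB x y) z = opB (opB x z) (opB y z)"
    using assms unfolding rack_def by blast
  moreover have "f a \<in> B" "f a' \<in> B" "f (opA a a') = opB (f a) (f a')"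
    using assms \<open>a \<in> A\<close> \<open>a' \<in> A\<close> unfolding rack_hom_def by auto
  ultimately show "opB (opB x (f a)) (f a') = opB (opB x (f a')) (f (opA a a'))"
    by simp
qed

lemma rack_action_restrict:
  assumes action: "rack_action R op Y act" and "X \<subseteq> Y"
    and invariant: "\<And>x r. x \<in> Y \<Longrightarrow> r \<in> R \<Longrightarrow> act x r \<in> X \<longleftrightarrow> x \<in> X"
  shows "rack_action R op X act"
  unfolding rack_action_def
proof (intro conjI ballI)
  fix r assume r: "r \<in> R"
  then have bij: "bij_betw (\<lambda>x. act x r) Y Y"
    using action unfolding rack_action_def by blast
  show "bij_betw (\<lambda>x. act x r) X X"
    unfolding bij_betw_def
  proof
    show "inj_on (\<lambda>x. act x r) X"
      using bij \<open>X \<subseteq> Y\<close> inj_on_subset unfolding bij_betw_def by blast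
    show "(\<lambda>x. act x r) ` X = X"
    proof
      show "(\<lambda>x. act x r) ` X \<subseteq> X"
        using \<open>X \<subseteq> Y\<close> invariant[OF _ r] by blast
      show "X \<subseteq> (\<lambda>x. act x r) ` X"
      proof
        fix y assume "y \<in> X"
        then obtain x where "x \<in> Y" "y = act x r"
          using bij \<open>X \<subseteq> Y\<close> unfolding bij_betw_def by blast
        then show "y \<in> (\<lambda>x. act x r) ` X"
          using \<open>y \<in> X\<close> invariant[OF _ r] by blast
      qed
    qed
  qed
next
  fix x r r' assume "x \<in> X" "r \<in> R" "r' \<in> R"
  then show "act (act x r) r' = act (act x r') (op r r')"
    using action \<open>X \<subseteq> Y\<close> unfolding rack_action_def by blast
qed

lemma pointed_rack_op_eq_base_iff:
  assumes "pointed_rack A op e" and "a \<in> A" and "r \<in> A"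
  shows "op a r = e \<longleftrightarrow> a = e"
proof -
  have "inj_on (\<lambda>x. op x r) A" and "e \<in> A" and "op e r = e"
    using assms unfolding pointed_rack_def rack_def bij_betw_def by auto
  then show ?thesis
    using \<open>a \<in> A\<close> by (metis inj_onD)
qed

lemma gen_augmented_rack_crossed_module:
  assumes "gen_augmented_rack R op X act p"
  shows "crossed_module_racks X (\<lambda>x y. act x (p y)) R op act p"
proof -
  have "rack R op" and action: "rack_action R op X act"
    and p_in: "\<forall>x\<in>X. p x \<in> R"
    and p_equivariant: "\<forall>x\<in>X. \<forall>r\<in>R. p (act x r) = op (p x) r"
    using assms unfolding gen_augmented_rack_def by auto
  have act_in: "act x r \<in> X" if "x \<in> X" "r \<in> R" for x r
    using action that unfolding rack_action_def bij_betw_def by blast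
  have act_law: "\<forall>x\<in>X. \<forall>r\<in>R. \<forall>r'\<in>R. act (act x r) r' = act (act x r') (op r r')"
    using action unfolding rack_action_def by blast
  have "rack X (\<lambda>x y. act x (p y))"
    unfolding rack_def
    using act_in p_in action act_law p_equivariant unfolding rack_action_def by simp
  moreover have "rack_hom X (\<lambda>x y. act x (p y)) R op p"
    unfolding rack_hom_def using p_in p_equivariant by simp
  ultimately show ?thesis
    unfolding crossed_module_racks_def
    using \<open>rack R op\<close> action act_law p_in p_equivariant act_in by simp
qed

lemma strict_2rack_kernel_gen_augmented_rack:
  assumes "strict_2rack R0 op0 e0 R1 op1 e1 s t i cmp"
  shows "gen_augmented_rack R0 op0 {f \<in> R1. s f = e0} (\<lambda>x r. op1 x (i r)) t"
proof -
  have R0: "pointed_rack R0 op0 e0" and R1: "pointed_rack R1 op1 e1"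
    and s: "rack_hom R1 op1 R0 op0 s" and t: "rack_hom R1 op1 R0 op0 t"
    and i: "rack_hom R0 op0 R1 op1 i"
    and si: "\<forall>r\<in>R0. s (i r) = r" and ti: "\<forall>r\<in>R0. t (i r) = r"
    using assms unfolding strict_2rack_def pointed_rack_hom_def by auto
  have action: "rack_action R0 op0 R1 (\<lambda>x r. op1 x (i r))"
    using rack_action_via_hom R1 i unfolding pointed_rack_def by blast
  have kernel_invariant: "op1 x (i r) \<in> {f \<in> R1. s f = e0} \<longleftrightarrow> x \<in> {f \<in> R1. s f = e0}"
    if "x \<in> R1" "r \<in> R0" for x r
  proof -
    have "s (op1 x (i r)) = op0 (s x) r"
      using s i si that unfolding rack_hom_def by simp
    moreover have "op1 x (i r) \<in> R1" and "s x \<in> R0"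
      using R1 s i that unfolding pointed_rack_def rack_def rack_hom_def by auto
    ultimately show ?thesis
      using pointed_rack_op_eq_base_iff[OF R0] that by auto
  qed
  have "rack_action R0 op0 {f \<in> R1. s f = e0} (\<lambda>x r. op1 x (i r))"
    using rack_action_restrict[OF action _ kernel_invariant] by blast
  moreover have "\<forall>x\<in>R1. t x \<in> R0"
    using t unfolding rack_hom_def by blast
  moreover have "t (op1 x (i r)) = op0 (t x) r" if "x \<in> R1" "r \<in> R0" for x r
    using t i ti that unfolding rack_hom_def by simp
  ultimately show ?thesis
    using R0 unfolding gen_augmented_rack_def pointed_rack_def by simp
qed

theorem mainTheorem5:
  fixes R0 :: "'a set" and op0 :: "'a \<Rightarrow> 'a \<Rightarrow> 'a" and e0 :: 'a
    and R1 :: "'b set" and op1 :: "'b \<Rightarrow> 'b \<Rightarrow> 'b" and e1 :: 'b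
    and s t :: "'b \<Rightarrow> 'a" and i :: "'a \<Rightarrow> 'b" and cmp :: "'b \<Rightarrow> 'b \<Rightarrow> 'b"
  assumes "strict_2rack R0 op0 e0 R1 op1 e1 s t i cmp"
  defines "X \<equiv> {f \<in> R1. s f = e0}"
      and "act \<equiv> (\<lambda>x r. op1 x (i r))"
  shows "rack_action R0 op0 X act
       \<and> (\<forall>x\<in>X. \<forall>r\<in>R0. t (act x r) = op0 (t x) r)
       \<and> gen_augmented_rack R0 op0 X act t
       \<and> crossed_module_racks X (\<lambda>x y. act x (t y)) R0 op0 act t"
proof -
  have augmented: "gen_augmented_rack R0 op0 X act t"
    unfolding X_def act_def by (rule strict_2rack_kernel_gen_augmented_rack[OF assms(1)])
  then have "crossed_module_racks X (\<lambda>x y. act x (t y)) R0 op0 act t"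
    by (rule gen_augmented_rack_crossed_module)
  with augmented show ?thesis
    unfolding gen_augmented_rack_def by blast
qed

end
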